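(* Let $X$ be a noetherian topological space and $A,B\subseteq X$ two closed subspaces neither of which is contained in the other. Then: (1) $c(A\cup B)\le\dim(A\cap B)$; (2) if $A\cap B$ is irreducible then $c(A\cup B)\le c(A)$; (3) if $B$ is irreducible then $c(A\cup B)\ge\min\{c(A),\dim(A\cap B)\}$; (4) if $B$ and $A\cap B$ are irreducible then $c(A\cup B)=\min\{c(A),\dim(A\cap B)\}$.
   Context: For a noetherian topological space $T$, the connectedness dimension is $c(T)=\min\{\dim Z: Z\subseteq T\text{ closed and } T\setminus Z\text{ disconnected}\}$, where $\dim$ is Krull dimension of the topological space. *)

theory Defs
  imports "HOL-Analysis.Analysis" "HOL-Library.Extended_Real"
begin

definition noetherian_space :: "'a topology \<Rightarrow> bool" where
  "noetherian_space X \<longleftrightarrow>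
     \<not> (\<exists>f :: nat \<Rightarrow> 'a set. (\<forall>n. closedin X (f n)) \<and> (\<forall>n. f (Suc n) \<subset> f n))"

definition irreducible_space :: "'a topology \<Rightarrow> bool" where
  "irreducible_space X \<longleftrightarrow> topspace X \<noteq> {} \<and>
     (\<forall>C D. closedin X C \<longrightarrow> closedin X D \<longrightarrow> topspace X \<subseteq> C \<union> D \<longrightarrow>
        topspace X \<subseteq> C \<or> topspace X \<subseteq> D)"

definition irred_chain :: "'a topology \<Rightarrow> 'a set list \<Rightarrow> bool" where
  "irred_chain X zs \<longleftrightarrow> zs \<noteq> [] \<and> sorted_wrt (\<subset>) zs \<and>
     (\<forall>Z \<in> set zs. closedin X Z \<and> irreducible_space (subtopology X Z))"

definition krull_dim :: "'a topology \<Rightarrow> ereal" where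
  "krull_dim X = (if topspace X = {} then -1
     else (SUP zs \<in> {zs. irred_chain X zs}. ereal (real (length zs) - 1)))"

definition disconnected_space :: "'a topology \<Rightarrow> bool" where
  "disconnected_space X \<longleftrightarrow> topspace X = {} \<or> \<not> connected_space X"

definition conn_dim :: "'a topology \<Rightarrow> ereal" where
  "conn_dim T = (INF Z \<in> {Z. closedin T Z \<and> disconnected_space (subtopology T (topspace T - Z))}.
                    krull_dim (subtopology T Z))"

end

theory Submission
  imports Defs
begin

text \<open>
  In a closed subspace S, a closed set Z disconnects S exactly when S - Z is empty or
  is covered by two closed sets F1, F2 that both meet S - Z but not in a common point.
  (1) A \<inter> B disconnects A \<union> B, the pieces being A and B.
  (2) If Z disconnects A via F1, F2, the irreducible set A \<inter> B lies in F1 \<union> Z, say, so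
  (F1 \<inter> A) \<union> B and F2 \<inter> A separate (A \<union> B) - Z, and Z disconnects A \<union> B.
  (3) If Z disconnects A \<union> B via F1, F2, either A \<inter> B \<subseteq> Z, whence dim Z \<ge> dim (A \<inter> B), or
  the irreducible set B lies in F1 \<union> Z, say, and then F1, F2 still separate A - Z, so that
  Z \<inter> A disconnects A and dim Z \<ge> dim (Z \<inter> A) \<ge> c(A).
  (4) combines (1), (2) and (3).
\<close>

definition closed_separation :: "'a topology \<Rightarrow> 'a set \<Rightarrow> 'a set \<Rightarrow> 'a set \<Rightarrow> bool" where
  "closed_separation X F1 F2 W \<longleftrightarrow> closedin X F1 \<and> closedin X F2 \<and> W \<subseteq> F1 \<union> F2 \<and>
     F1 \<inter> F2 \<inter> W = {} \<and> F1 \<inter> W \<noteq> {} \<and> F2 \<inter> W \<noteq> {}"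

lemma closed_separation_commute:
  "closed_separation X F1 F2 W \<longleftrightarrow> closed_separation X F2 F1 W"
  unfolding closed_separation_def by blast

lemma disconnected_space_subtopology_iff:
  assumes "W \<subseteq> topspace X"
  shows "disconnected_space (subtopology X W) \<longleftrightarrow>
    W = {} \<or> (\<exists>F1 F2. closed_separation X F1 F2 W)"
proof -
  have topspace_W: "topspace (subtopology X W) = W"
    using assms by auto
  have "connected_space (subtopology X W) \<longleftrightarrow> connectedin X W"
    using assms by (simp add: connectedin_def)
  then show ?thesis
    unfolding disconnected_space_def closed_separation_def connectedin_closedin topspace_W
    using assms by blast
qed

definition disconnecting_sets :: "'a topology \<Rightarrow> 'a set \<Rightarrow> 'a set set" where
  "disconnecting_sets X S =
     {Z. closedin X Z \<and> Z \<subseteq> S \<and> disconnected_space (subtopology X (S - Z))}"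

lemma conn_dim_subtopology:
  assumes "closedin X S"
  shows "conn_dim (subtopology X S) =
    (INF Z \<in> disconnecting_sets X S. krull_dim (subtopology X Z))"
proof -
  have topspace_S: "topspace (subtopology X S) = S"
    using closedin_subset[OF assms] by auto
  have "{Z. closedin (subtopology X S) Z \<and>
          disconnected_space (subtopology (subtopology X S) (S - Z))} = disconnecting_sets X S"
    by (auto simp: disconnecting_sets_def subtopology_subtopology Int_absorb1
        closedin_closed_subtopology[OF assms])
  moreover have "krull_dim (subtopology X (S \<inter> Z)) = krull_dim (subtopology X Z)"
    if "Z \<in> disconnecting_sets X S" for Z
    using that by (auto simp: disconnecting_sets_def Int_absorb1)
  ultimately show ?thesis
    unfolding conn_dim_def topspace_S subtopology_subtopology by (auto intro: INF_cong)
qed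

lemma closed_separation_in_disconnecting_sets:
  assumes "closedin X S" "closedin X Z" "Z \<subseteq> S" "closed_separation X F1 F2 (S - Z)"
  shows "Z \<in> disconnecting_sets X S"
proof -
  have "S - Z \<subseteq> topspace X"
    using closedin_subset[OF assms(1)] by blast
  then have "disconnected_space (subtopology X (S - Z))"
    using assms(4) disconnected_space_subtopology_iff by blast
  then show ?thesis
    using assms(2,3) unfolding disconnecting_sets_def by blast
qed

lemma noetherian_space_wf_closedin:
  assumes "noetherian_space X"
  shows "wf {(S, T). closedin X S \<and> closedin X T \<and> S \<subset> T}"
  unfolding wf_iff_no_infinite_down_chain
proof (rule notI, elim exE)
  fix f assume "\<forall>i. (f (Suc i), f i) \<in> {(S, T). closedin X S \<and> closedin X T \<and> S \<subset> T}"
  then have "(\<forall>n. closedin X (f n)) \<and> (\<forall>n. f (Suc n) \<subset> f n)"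
    by simp
  then show False
    using assms unfolding noetherian_space_def by blast
qed

lemma irreducible_space_subtopology_minimal:
  assumes "closedin X W" "W \<noteq> {}"
    and minimal: "\<And>C. closedin X C \<Longrightarrow> C \<subset> W \<Longrightarrow> C = {}"
  shows "irreducible_space (subtopology X W)"
proof -
  have topspace_W: "topspace (subtopology X W) = W"
    using closedin_subset[OF assms(1)] by auto
  have "W \<subseteq> C \<or> W \<subseteq> D"
    if "closedin (subtopology X W) C" "closedin (subtopology X W) D" "W \<subseteq> C \<union> D" for C D
  proof -
    have "closedin X C" "C \<subseteq> W"
      using that(1) closedin_closed_subtopology[OF assms(1)] by auto
    then have "C = W \<or> C = {}"
      using minimal by blast
    then show ?thesis
      using that(3) by blast
  qed
  then show ?thesis
    unfolding irreducible_space_def topspace_W using assms(2) by blast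
qed

lemma noetherian_space_obtain_irreducible:
  assumes "noetherian_space X" "closedin X T" "T \<noteq> {}"
  obtains W where "closedin X W" "W \<subseteq> T" "irreducible_space (subtopology X W)"
proof -
  let ?Q = "{S. closedin X S \<and> S \<noteq> {} \<and> S \<subseteq> T}"
  obtain W where W: "W \<in> ?Q"
    and minimal: "\<And>S. (S, W) \<in> {(S, T). closedin X S \<and> closedin X T \<and> S \<subset> T} \<Longrightarrow> S \<notin> ?Q"
    using wfE_min[OF noetherian_space_wf_closedin[OF assms(1)], of T ?Q] assms(2,3) by blast
  have "irreducible_space (subtopology X W)"
    using W minimal by (intro irreducible_space_subtopology_minimal) auto
  with W that show thesis by blast
qed

lemma krull_dim_subtopology_nonneg:
  assumes "noetherian_space X" "closedin X T" "T \<noteq> {}"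
  shows "0 \<le> krull_dim (subtopology X T)"
proof -
  obtain W where W: "closedin X W" "W \<subseteq> T" "irreducible_space (subtopology X W)"
    using noetherian_space_obtain_irreducible[OF assms] .
  have "irred_chain (subtopology X T) [W]"
    using W closedin_subset_topspace[OF W(1,2)]
    by (simp add: irred_chain_def subtopology_subtopology Int_absorb1)
  then have "ereal (real (length [W]) - 1) \<le>
      (SUP zs \<in> {zs. irred_chain (subtopology X T) zs}. ereal (real (length zs) - 1))"
    by (intro SUP_upper) simp
  then show ?thesis
    using assms(3) closedin_subset[OF assms(2)]
    by (simp add: krull_dim_def Int_absorb1 zero_ereal_def)
qed

lemma krull_dim_subtopology_mono:
  assumes "noetherian_space X" "closedin X S" "closedin X T" "S \<subseteq> T"
  shows "krull_dim (subtopology X S) \<le> krull_dim (subtopology X T)"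
proof (cases "S = {}")
  case True
  then have "krull_dim (subtopology X S) = -1"
    by (simp add: krull_dim_def)
  moreover have "-1 \<le> krull_dim (subtopology X T)"
  proof (cases "T = {}")
    case False
    then show ?thesis
      using krull_dim_subtopology_nonneg[OF assms(1,3)] order.trans[of "-1 :: ereal" 0] by simp
  qed (simp add: krull_dim_def)
  ultimately show ?thesis by simp
next
  case False
  have "{zs. irred_chain (subtopology X S) zs} \<subseteq> {zs. irred_chain (subtopology X T) zs}"
    using assms(4)
    by (auto simp: irred_chain_def closedin_closed_subtopology assms(2,3)
        subtopology_subtopology Int_absorb1)
  then show ?thesis
    using False assms(4) closedin_subset[OF assms(2)] closedin_subset[OF assms(3)]
    by (auto simp: krull_dim_def Int_absorb1 intro!: SUP_subset_mono)
qed

lemma irreducible_space_subtopology_subset_Un: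
  assumes "irreducible_space (subtopology X S)" "S \<subseteq> topspace X"
    and "closedin X C" "closedin X D" "S \<subseteq> C \<union> D"
  shows "S \<subseteq> C \<or> S \<subseteq> D"
proof -
  have topspace_S: "topspace (subtopology X S) = S"
    using assms(2) by auto
  have "closedin (subtopology X S) (C \<inter> S)" "closedin (subtopology X S) (D \<inter> S)"
    using assms(3,4) closedin_subtopology by blast+
  moreover have "S \<subseteq> (C \<inter> S) \<union> (D \<inter> S)"
    using assms(5) by blast
  ultimately have "S \<subseteq> C \<inter> S \<or> S \<subseteq> D \<inter> S"
    using assms(1) unfolding irreducible_space_def topspace_S by blast
  then show ?thesis by blast
qed

lemma closed_separation_irreducible_side:
  assumes "closed_separation X F1 F2 W" "closedin X Z"
    and "irreducible_space (subtopology X I)" "I \<subseteq> topspace X" "I \<subseteq> W \<union> Z"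
  shows "I \<subseteq> F1 \<union> Z \<or> I \<subseteq> F2 \<union> Z"
proof (rule irreducible_space_subtopology_subset_Un[OF assms(3,4)])
  show "closedin X (F1 \<union> Z)" "closedin X (F2 \<union> Z)"
    using assms(1,2) by (auto simp: closed_separation_def)
  show "I \<subseteq> (F1 \<union> Z) \<union> (F2 \<union> Z)"
    using assms(1,5) by (auto simp: closed_separation_def)
qed

lemma closed_separation_Un:
  assumes "closedin X A" "closedin X B" "closed_separation X F1 F2 (A - Z)" "A \<inter> B \<subseteq> F1 \<union> Z"
  shows "closed_separation X ((F1 \<inter> A) \<union> B) (F2 \<inter> A) ((A \<union> B) - Z)"
proof -
  have "closedin X ((F1 \<inter> A) \<union> B)" "closedin X (F2 \<inter> A)"
    using assms(1-3) by (auto simp: closed_separation_def)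
  moreover have "(A \<union> B) - Z \<subseteq> ((F1 \<inter> A) \<union> B) \<union> (F2 \<inter> A)"
    "((F1 \<inter> A) \<union> B) \<inter> (F2 \<inter> A) \<inter> ((A \<union> B) - Z) = {}"
    "((F1 \<inter> A) \<union> B) \<inter> ((A \<union> B) - Z) \<noteq> {}" "(F2 \<inter> A) \<inter> ((A \<union> B) - Z) \<noteq> {}"
    using assms(3,4) unfolding closed_separation_def by blast+
  ultimately show ?thesis
    unfolding closed_separation_def by blast
qed

lemma closed_separation_restrict:
  assumes "closed_separation X F1 F2 ((A \<union> B) - Z)" "B \<subseteq> F1 \<union> Z" "\<not> A \<inter> B \<subseteq> Z"
  shows "closed_separation X F1 F2 (A - Z)"
  using assms unfolding closed_separation_def by blast

lemma Int_in_disconnecting_sets_Un: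
  assumes "closedin X A" "closedin X B" "\<not> A \<subseteq> B" "\<not> B \<subseteq> A"
  shows "A \<inter> B \<in> disconnecting_sets X (A \<union> B)"
proof -
  have "closed_separation X A B ((A \<union> B) - A \<inter> B)"
    using assms unfolding closed_separation_def by blast
  then show ?thesis
    using assms(1,2) by (intro closed_separation_in_disconnecting_sets) auto
qed

lemma conn_dim_Un_le_krull_dim_Int:
  assumes "closedin X A" "closedin X B" "\<not> A \<subseteq> B" "\<not> B \<subseteq> A"
  shows "conn_dim (subtopology X (A \<union> B)) \<le> krull_dim (subtopology X (A \<inter> B))"
  unfolding conn_dim_subtopology[OF closedin_Un[OF assms(1,2)]]
  using Int_in_disconnecting_sets_Un[OF assms] by (rule INF_lower)

lemma disconnecting_sets_Un_irreducible_Int: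
  assumes "closedin X A" "closedin X B"
    and "irreducible_space (subtopology X (A \<inter> B))"
    and Z: "Z \<in> disconnecting_sets X A" "Z \<noteq> A"
  shows "Z \<in> disconnecting_sets X (A \<union> B)"
proof -
  have "closedin X Z" "Z \<subseteq> A" "disconnected_space (subtopology X (A - Z))"
    using Z(1) by (auto simp: disconnecting_sets_def)
  then obtain F1 F2 where F: "closed_separation X F1 F2 (A - Z)"
    using Z(2) assms(1) closedin_subset disconnected_space_subtopology_iff[of "A - Z" X]
    by blast
  have "A \<inter> B \<subseteq> topspace X"
    using assms(1) closedin_subset by blast
  then have "A \<inter> B \<subseteq> F1 \<union> Z \<or> A \<inter> B \<subseteq> F2 \<union> Z"
    using closed_separation_irreducible_side[OF F \<open>closedin X Z\<close> assms(3)] by blast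
  then obtain G1 G2 where "closed_separation X G1 G2 (A - Z)" "A \<inter> B \<subseteq> G1 \<union> Z"
    using F closed_separation_commute by blast
  then have "closed_separation X ((G1 \<inter> A) \<union> B) (G2 \<inter> A) ((A \<union> B) - Z)"
    using closed_separation_Un assms(1,2) by blast
  then show ?thesis
    using \<open>closedin X Z\<close> \<open>Z \<subseteq> A\<close> assms(1,2)
    by (intro closed_separation_in_disconnecting_sets) auto
qed

lemma conn_dim_Un_le_conn_dim:
  assumes "noetherian_space X" "closedin X A" "closedin X B" "\<not> A \<subseteq> B" "\<not> B \<subseteq> A"
    and "irreducible_space (subtopology X (A \<inter> B))"
  shows "conn_dim (subtopology X (A \<union> B)) \<le> conn_dim (subtopology X A)"
  unfolding conn_dim_subtopology[OF closedin_Un[OF assms(2,3)]] conn_dim_subtopology[OF assms(2)]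
proof (rule INF_mono)
  fix Z assume Z: "Z \<in> disconnecting_sets X A"
  show "\<exists>Z' \<in> disconnecting_sets X (A \<union> B).
      krull_dim (subtopology X Z') \<le> krull_dim (subtopology X Z)"
  proof (cases "Z = A")
    case True
    \<comment> \<open>A - A = {} counts as disconnected, but has no separation to extend to A \<union> B.\<close>
    then show ?thesis
      using Int_in_disconnecting_sets_Un[OF assms(2-5)]
        krull_dim_subtopology_mono[OF assms(1) closedin_Int[OF assms(2,3)] assms(2)] by blast
  next
    case False
    then show ?thesis
      using disconnecting_sets_Un_irreducible_Int[OF assms(2,3,6) Z] by blast
  qed
qed

lemma disconnecting_sets_irreducible_Un:
  assumes "closedin X A" "closedin X B"
    and "irreducible_space (subtopology X B)"
    and Z: "Z \<in> disconnecting_sets X (A \<union> B)" "\<not> A \<inter> B \<subseteq> Z"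
  shows "Z \<inter> A \<in> disconnecting_sets X A"
proof -
  have "closedin X Z" "disconnected_space (subtopology X ((A \<union> B) - Z))"
    using Z(1) by (auto simp: disconnecting_sets_def)
  then obtain F1 F2 where F: "closed_separation X F1 F2 ((A \<union> B) - Z)"
    using Z(2) assms(1,2) closedin_subset disconnected_space_subtopology_iff[of "(A \<union> B) - Z" X]
    by blast
  have "B \<subseteq> topspace X"
    using assms(2) closedin_subset by blast
  then have "B \<subseteq> F1 \<union> Z \<or> B \<subseteq> F2 \<union> Z"
    using closed_separation_irreducible_side[OF F \<open>closedin X Z\<close> assms(3)] by blast
  then obtain G1 G2 where "closed_separation X G1 G2 ((A \<union> B) - Z)" "B \<subseteq> G1 \<union> Z"
    using F closed_separation_commute by blast
  then have "closed_separation X G1 G2 (A - Z \<inter> A)"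
    using closed_separation_restrict[OF _ _ Z(2)] by (metis Diff_Int2 Int_absorb)
  then show ?thesis
    using \<open>closedin X Z\<close> assms(1)
    by (intro closed_separation_in_disconnecting_sets) auto
qed

lemma min_conn_dim_krull_dim_le_conn_dim_Un:
  assumes "noetherian_space X" "closedin X A" "closedin X B"
    and "irreducible_space (subtopology X B)"
  shows "min (conn_dim (subtopology X A)) (krull_dim (subtopology X (A \<inter> B)))
    \<le> conn_dim (subtopology X (A \<union> B))"
  unfolding conn_dim_subtopology[OF closedin_Un[OF assms(2,3)]]
proof (rule INF_greatest)
  fix Z assume Z: "Z \<in> disconnecting_sets X (A \<union> B)"
  then have "closedin X Z"
    by (simp add: disconnecting_sets_def)
  show "min (conn_dim (subtopology X A)) (krull_dim (subtopology X (A \<inter> B)))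
      \<le> krull_dim (subtopology X Z)"
  proof (cases "A \<inter> B \<subseteq> Z")
    case True
    then have "krull_dim (subtopology X (A \<inter> B)) \<le> krull_dim (subtopology X Z)"
      using krull_dim_subtopology_mono[OF assms(1) closedin_Int[OF assms(2,3)] \<open>closedin X Z\<close>]
      by blast
    then show ?thesis
      by (meson min.coboundedI2)
  next
    case False
    then have "Z \<inter> A \<in> disconnecting_sets X A"
      using disconnecting_sets_irreducible_Un[OF assms(2-4) Z] by blast
    then have "conn_dim (subtopology X A) \<le> krull_dim (subtopology X (Z \<inter> A))"
      unfolding conn_dim_subtopology[OF assms(2)] by (rule INF_lower)
    also have "\<dots> \<le> krull_dim (subtopology X Z)"
      using krull_dim_subtopology_mono[OF assms(1) closedin_Int[OF \<open>closedin X Z\<close> assms(2)]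
          \<open>closedin X Z\<close>] by blast
    finally show ?thesis
      by (meson min.coboundedI1)
  qed
qed

theorem mainTheorem10:
  fixes X :: "'a topology" and A B :: "'a set"
  assumes "noetherian_space X"
    and "closedin X A" and "closedin X B"
    and "\<not> A \<subseteq> B" and "\<not> B \<subseteq> A"
  shows "conn_dim (subtopology X (A \<union> B)) \<le> krull_dim (subtopology X (A \<inter> B))
    \<and> (irreducible_space (subtopology X (A \<inter> B)) \<longrightarrow>
           conn_dim (subtopology X (A \<union> B)) \<le> conn_dim (subtopology X A))
    \<and> (irreducible_space (subtopology X B) \<longrightarrow>
           min (conn_dim (subtopology X A)) (krull_dim (subtopology X (A \<inter> B)))
             \<le> conn_dim (subtopology X (A \<union> B)))
    \<and> (irreducible_space (subtopology X B) \<and> irreducible_space (subtopology X (A \<inter> B)) \<longrightarrow>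
           conn_dim (subtopology X (A \<union> B)) =
             min (conn_dim (subtopology X A)) (krull_dim (subtopology X (A \<inter> B))))"
  using conn_dim_Un_le_krull_dim_Int[OF assms(2-5)]
    conn_dim_Un_le_conn_dim[OF assms]
    min_conn_dim_krull_dim_le_conn_dim_Un[OF assms(1-3)]
  by (meson antisym min.boundedI)

end
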